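(* Let $p \in (0,1]$, let $s = 1/p \geq 1$, and let $q = 1-p$. For integers $1 \le n \le s$ define $$x_n = \sum_{k=1}^n\binom{n}{k}(-1)^{k+1}\frac{1}{1-q^k}, \qquad y_n = \sum_{k=1}^n\binom{n}{k}(-1)^{k+1}\frac{1+q^k}{(1-q^k)^2}$$ (these are $\mathbb{E}(Y_n^s)$ and $\mathbb{E}((Y_n^s)^2)$ where $Y_n^s$ is the maximum of $n$ independent geometric random variables on $\{1,2,\dots\}$ with parameter $p$). Then $y_1 = (2-p)/p^2$, and for every integer $n$ with $1 < n \le s$, $$y_n \;=\; \frac{\sum_{i=1}^{n-1}\binom{n}{i} p^i (1 - p)^{n - i}\, y_{n-i} \;-\; 1 \;+\; 2x_n}{1- (1 - p)^{n}}.$$ That is, the sequence $(y_n)$ is the solution of this recurrence with initial value $(2-p)/p^2$.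
   Context: A geometric random variable with parameter $p$ on $\{1,2,\dots\}$ has $\mathbb{P}(Z=m)=(1-p)^{m-1}p$ for $m\ge1$. *)

theory Defs
  imports Complex_Main
begin

definition xmax :: "real \<Rightarrow> nat \<Rightarrow> real" where
  "xmax p n = (\<Sum>k=1..n. real (n choose k) * (-1) ^ (k + 1) * (1 / (1 - (1 - p) ^ k)))"

definition ymax :: "real \<Rightarrow> nat \<Rightarrow> real" where
  "ymax p n = (\<Sum>k=1..n. real (n choose k) * (-1) ^ (k + 1)
      * ((1 + (1 - p) ^ k) / (1 - (1 - p) ^ k) ^ 2))"

end

theory Submission
  imports Defs
begin

(* Write A g n for the alternating binomial sum of g, so that x_n and y_n are A applied to
   1/(1 - q^k) and (1 + q^k)/(1 - q^k)^2.  Exchanging summations, with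
   C(n,i) C(n-i,k) = C(n,k) C(n-k,i) and the binomial theorem, gives the mixture identity
   sum_i C(n,i) p^i q^(n-i) A g (n-i) = A (q^k g k) n: the algebraic form of conditioning on
   how many of the n geometric variables succeed at the first trial.  For the second moment
   q^k g k = g k - 2/(1 - q^k) + 1, and A 1 n = 1, so the mixture of the y_(n-i) equals
   y_n - 2 x_n + 1.  Its i = 0 term is q^n y_n and its i = n term vanishes; solving for y_n
   gives the recurrence. *)

lemma choose_mult_choose_diff:
  "(n choose i) * ((n - i) choose k) = (n choose k) * ((n - k) choose i)"
proof (cases "i + k \<le> n")
  case True
  have "(n choose i) * ((n - i) choose k) = (n choose (i + k)) * ((i + k) choose i)"
    using choose_mult[of i "i + k" n] True by simp
  also have "\<dots> = (n choose (i + k)) * ((i + k) choose k)"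
    using binomial_symmetric[of k "i + k"] by simp
  also have "\<dots> = (n choose k) * ((n - k) choose i)"
    using choose_mult[of k "i + k" n] True by simp
  finally show ?thesis .
next
  case False
  then show ?thesis
    by (cases "k \<le> n"; cases "i \<le> n") (auto simp: binomial_eq_0)
qed

lemma sum_choose_mult_choose_diff:
  fixes p q :: "'a::comm_semiring_1"
  shows "(\<Sum>i\<le>n. of_nat (n choose i) * of_nat ((n - i) choose k) * p ^ i * q ^ (n - i))
    = of_nat (n choose k) * q ^ k * (p + q) ^ (n - k)"
proof (cases "k \<le> n")
  case True
  have "(\<Sum>i\<le>n. of_nat (n choose i) * of_nat ((n - i) choose k) * p ^ i * q ^ (n - i))
      = (\<Sum>i\<le>n. of_nat (n choose k) * of_nat ((n - k) choose i) * p ^ i * q ^ (n - i))"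
    by (simp only: choose_mult_choose_diff flip: of_nat_mult)
  also have "\<dots> = (\<Sum>i\<le>n - k.
      of_nat (n choose k) * of_nat ((n - k) choose i) * p ^ i * q ^ (n - i))"
    by (rule sum.mono_neutral_right) (auto simp: binomial_eq_0)
  also have "\<dots> = of_nat (n choose k) * q ^ k *
      (\<Sum>i\<le>n - k. of_nat ((n - k) choose i) * p ^ i * q ^ (n - k - i))"
    unfolding sum_distrib_left
  proof (rule sum.cong)
    fix i assume "i \<in> {..n - k}"
    then have "q ^ (n - i) = q ^ k * q ^ (n - k - i)"
      using True by (simp add: power_add [symmetric])
    then show "of_nat (n choose k) * of_nat ((n - k) choose i) * p ^ i * q ^ (n - i)
        = of_nat (n choose k) * q ^ k * (of_nat ((n - k) choose i) * p ^ i * q ^ (n - k - i))"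
      by (simp add: ac_simps)
  qed simp
  also have "\<dots> = of_nat (n choose k) * q ^ k * (p + q) ^ (n - k)"
    by (simp add: binomial_ring)
  finally show ?thesis .
next
  case False
  then show ?thesis
    by (simp add: binomial_eq_0)
qed

definition alt_binomial_sum :: "(nat \<Rightarrow> 'a::comm_ring_1) \<Rightarrow> nat \<Rightarrow> 'a" where
  "alt_binomial_sum g n = (\<Sum>k=1..n. of_nat (n choose k) * (-1) ^ (k + 1) * g k)"

lemma alt_binomial_sum_cong:
  "(\<And>k. 1 \<le> k \<Longrightarrow> k \<le> n \<Longrightarrow> f k = g k) \<Longrightarrow>
    alt_binomial_sum f n = alt_binomial_sum g n"
  unfolding alt_binomial_sum_def by (rule sum.cong) auto

lemma alt_binomial_sum_extend:
  assumes "n \<le> N"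
  shows "alt_binomial_sum g n = (\<Sum>k=1..N. of_nat (n choose k) * (-1) ^ (k + 1) * g k)"
  unfolding alt_binomial_sum_def
  by (rule sum.mono_neutral_left) (use assms in \<open>auto simp: binomial_eq_0\<close>)

lemma alt_binomial_sum_add:
  "alt_binomial_sum (\<lambda>k. f k + g k) n = alt_binomial_sum f n + alt_binomial_sum g n"
  unfolding alt_binomial_sum_def by (simp only: distrib_left sum.distrib)

lemma alt_binomial_sum_diff:
  "alt_binomial_sum (\<lambda>k. f k - g k) n = alt_binomial_sum f n - alt_binomial_sum g n"
  unfolding alt_binomial_sum_def by (simp only: right_diff_distrib sum_subtractf)

lemma alt_binomial_sum_mult:
  "alt_binomial_sum (\<lambda>k. c * g k) n = c * alt_binomial_sum g n"
  by (simp add: alt_binomial_sum_def sum_distrib_left ac_simps)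

lemma alt_binomial_sum_one:
  assumes "n \<ge> 1"
  shows "alt_binomial_sum (\<lambda>_. 1) n = 1"
proof -
  have "0 = (-1 + 1 :: 'a) ^ n"
    using assms by (simp add: power_0_left)
  also have "\<dots> = (\<Sum>k\<le>n. of_nat (n choose k) * (-1) ^ k)"
    unfolding binomial_ring by simp
  also have "\<dots> = 1 - alt_binomial_sum (\<lambda>_. 1) n"
    by (simp add: alt_binomial_sum_def atMost_atLeast0 sum.atLeast_Suc_atMost sum_negf)
  finally show ?thesis
    by simp
qed

lemma alt_binomial_sum_binomial_mixture:
  fixes p q :: "'a::comm_ring_1"
  assumes "p + q = 1"
  shows "(\<Sum>i\<le>n. of_nat (n choose i) * p ^ i * q ^ (n - i) * alt_binomial_sum g (n - i))
    = alt_binomial_sum (\<lambda>k. q ^ k * g k) n"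
proof -
  have "(\<Sum>i\<le>n. of_nat (n choose i) * p ^ i * q ^ (n - i) * alt_binomial_sum g (n - i))
      = (\<Sum>i\<le>n. \<Sum>k=1..n. (-1) ^ (k + 1) * g k *
           (of_nat (n choose i) * of_nat ((n - i) choose k) * p ^ i * q ^ (n - i)))"
    by (simp add: alt_binomial_sum_extend [of _ n] sum_distrib_left ac_simps)
  also have "\<dots> = (\<Sum>k=1..n. (-1) ^ (k + 1) * g k *
           (\<Sum>i\<le>n. of_nat (n choose i) * of_nat ((n - i) choose k) * p ^ i * q ^ (n - i)))"
    by (simp add: sum.swap [of _ "{..n}"] sum_distrib_left)
  also have "\<dots> = alt_binomial_sum (\<lambda>k. q ^ k * g k) n"
    by (simp only: sum_choose_mult_choose_diff assms) (simp add: alt_binomial_sum_def ac_simps)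
  finally show ?thesis .
qed

lemma mult_one_plus_over_one_minus_sq:
  fixes t :: "'a::field"
  assumes "t \<noteq> 1"
  shows "t * ((1 + t) / (1 - t) ^ 2) = (1 + t) / (1 - t) ^ 2 - 2 * (1 / (1 - t)) + 1"
proof -
  have "1 - t \<noteq> 0"
    using assms by simp
  then show ?thesis
    by (simp add: divide_simps) algebra
qed

lemma power_one_minus_less_one:
  fixes p :: "'a::linordered_idom"
  assumes "0 < p" "p \<le> 1" "1 \<le> k"
  shows "(1 - p) ^ k < 1"
  using assms by (simp add: power_less_one_iff)

lemma ymax_binomial_mixture:
  fixes p :: real
  assumes "0 < p" "p \<le> 1" "1 \<le> n"
  shows "(\<Sum>i\<le>n. real (n choose i) * p ^ i * (1 - p) ^ (n - i) * ymax p (n - i))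
    = ymax p n - 2 * xmax p n + 1"
proof -
  define q where "q = 1 - p"
  define f where "f k = (1 + q ^ k) / (1 - q ^ k) ^ 2" for k :: nat
  define g where "g k = 1 / (1 - q ^ k)" for k :: nat
  have ymax_eq: "ymax p = alt_binomial_sum f"
    by (simp add: fun_eq_iff ymax_def alt_binomial_sum_def f_def q_def)
  have xmax_eq: "xmax p = alt_binomial_sum g"
    by (simp add: fun_eq_iff xmax_def alt_binomial_sum_def g_def q_def)
  have shift: "q ^ k * f k = f k - 2 * g k + 1" if "1 \<le> k" for k
    unfolding f_def g_def
    by (rule mult_one_plus_over_one_minus_sq)
      (use power_one_minus_less_one [OF assms(1,2) that] in \<open>simp add: q_def\<close>)
  have "(\<Sum>i\<le>n. real (n choose i) * p ^ i * q ^ (n - i) * alt_binomial_sum f (n - i))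
      = alt_binomial_sum (\<lambda>k. q ^ k * f k) n"
    by (rule alt_binomial_sum_binomial_mixture) (simp add: q_def)
  also have "\<dots> = alt_binomial_sum (\<lambda>k. f k - 2 * g k + 1) n"
    by (rule alt_binomial_sum_cong) (simp add: shift)
  also have "\<dots> = alt_binomial_sum f n - 2 * alt_binomial_sum g n + 1"
    using assms by (simp add: alt_binomial_sum_add alt_binomial_sum_diff alt_binomial_sum_mult
        alt_binomial_sum_one)
  finally show ?thesis
    by (simp add: ymax_eq xmax_eq q_def)
qed

theorem theoremB4:
  fixes p :: real
  assumes "0 < p" and "p \<le> 1"
  shows "ymax p 1 = (2 - p) / p ^ 2
    \<and> (\<forall>n::nat. 1 < n \<and> real n \<le> 1 / p \<longrightarrow>
         ymax p n = ((\<Sum>i=1..n-1. real (n choose i) * p ^ i * (1 - p) ^ (n - i) * ymax p (n - i))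
                      - 1 + 2 * xmax p n) / (1 - (1 - p) ^ n))"
proof (intro conjI allI impI)
  show "ymax p 1 = (2 - p) / p ^ 2"
    using assms by (simp add: ymax_def field_simps power2_eq_square)
next
  fix n :: nat
  assume "1 < n \<and> real n \<le> 1 / p"
  then have n: "1 < n" by simp
  define S where
    "S = (\<Sum>i=1..n-1. real (n choose i) * p ^ i * (1 - p) ^ (n - i) * ymax p (n - i))"
  have "(\<Sum>i\<le>n. real (n choose i) * p ^ i * (1 - p) ^ (n - i) * ymax p (n - i))
      = (1 - p) ^ n * ymax p n + S"
    using n by (cases n)
      (simp_all add: S_def atMost_atLeast0 sum.atLeast_Suc_atMost ymax_def [of _ 0])
  then have "(1 - (1 - p) ^ n) * ymax p n = S - 1 + 2 * xmax p n"
    using ymax_binomial_mixture [of p n] assms n by (simp add: algebra_simps)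
  moreover have "(1 - p) ^ n \<noteq> 1"
    using power_one_minus_less_one [OF assms, of n] n by simp
  ultimately show "ymax p n = (S - 1 + 2 * xmax p n) / (1 - (1 - p) ^ n)"
    by (simp add: field_simps)
qed

end
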